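(* Assume $z>w>x>y$, $w+x>z+y$, $w>0$, $z>0$, that $G$ is connected, that $\boldsymbol\psi>\mathbf 0$ and $\boldsymbol\eta\in[0,1]^n$ are time-invariant, and that each $\lambda_i(t)>0$ is increasing in $t$ with $\lim_{t\to\infty}\lambda_i(t)=\infty$. Then for every initial condition $\mathbf q(0)\in\mathbb R^n$ there exist a vector $\underline{\boldsymbol\lambda}>\mathbf 0$ and a number $\underline T>0$ such that if $\lambda_i(t)<\underline\lambda_i$ for all $i$ and all $t<\underline T$, then all players favour the risk-dominant action $D$ as $t\to\infty$ (i.e., $q_i(t)>0$ for all $i$ and all sufficiently large $t$).
   Context: There are $n$ agents on an undirected simple graph with symmetric adjacency matrix $G\in\{0,1\}^{n\times n}$, $G_{ii}=0$; $N_i=\{j:G_{ij}=1\}$. Actions are $C$ and $D$. The stage payoff to an agent playing the row action against a neighbour playing the column action is $u(C,C)=z$, $u(C,D)=y$, $u(D,C)=x$, $u(D,D)=w$. The state is $\mathbf q(t)\in\mathbb R^n$ ($q_i$ = attraction of $D$ minus attraction of $C$ for agent $i$), $p_i(t)=1/(1+e^{-\lambda_i(t) q_i(t)})$, and the (non-autonomous) dynamics are $$\dot q_i=-\psi_i q_i+\big(p_i+\eta_i(1-p_i)\big)\sum_{j\in N_i}\big(p_jw+(1-p_j)x\big)-\big(1-p_i+\eta_ip_i\big)\sum_{j\in N_i}\big(p_jy+(1-p_j)z\big).$$ *)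

theory Defs
  imports "HOL-Analysis.Analysis"
begin

definition logistic_p :: "real \<Rightarrow> real \<Rightarrow> real" where
  "logistic_p lam qi = 1 / (1 + exp (- lam * qi))"

definition graph_connected :: "('n \<Rightarrow> 'n \<Rightarrow> bool) \<Rightarrow> bool" where
  "graph_connected G \<longleftrightarrow> (\<forall>i j. G\<^sup>*\<^sup>* i j)"

text \<open>Right-hand side of the dynamics for agent i, given the current
  rationality levels lamv (one per agent) and the current state qv.
  Payoffs: u(C,C)=z, u(C,D)=y, u(D,C)=x, u(D,D)=w.\<close>
definition dyn_rhs ::
  "('n::finite \<Rightarrow> 'n \<Rightarrow> bool) \<Rightarrow> real \<Rightarrow> real \<Rightarrow> real \<Rightarrow> real \<Rightarrow>
   ('n \<Rightarrow> real) \<Rightarrow> ('n \<Rightarrow> real) \<Rightarrow> ('n \<Rightarrow> real) \<Rightarrow> ('n \<Rightarrow> real) \<Rightarrow> 'n \<Rightarrow> real" where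
  "dyn_rhs G x y z w psi eta lamv qv i =
     (let p = (\<lambda>j. logistic_p (lamv j) (qv j)) in
      - psi i * qv i
      + (p i + eta i * (1 - p i)) * (\<Sum>j\<in>{j. G i j}. p j * w + (1 - p j) * x)
      - (1 - p i + eta i * p i) * (\<Sum>j\<in>{j. G i j}. p j * y + (1 - p j) * z))"

end

theory Submission
  imports Defs
begin

text \<open>
  Write the dynamics as \<open>q\<^sub>i' = - \<psi>\<^sub>i q\<^sub>i + A\<^sub>i(t)\<close>, where \<open>A\<^sub>i\<close> is the expected gain of D over C
  accumulated over the neighbours of i. The gain is bounded by \<open>M = n (|w| + |x| + |y| + |z|)\<close>,
  so \<open>|q\<^sub>i|\<close> never exceeds \<open>|q\<^sub>i(0)| + M / \<psi>\<^sub>i\<close>. While all \<open>\<lambda>\<^sub>j\<close> are small, every choice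
  probability is therefore close to 1/2, and risk dominance \<open>w + x > y + z\<close> gives every \<open>A\<^sub>i\<close>
  a uniform positive lower bound; this drives all \<open>q\<^sub>i\<close> positive within a warm-up time
  determined by \<open>q(0)\<close>. From then on the positive orthant is forward invariant: where
  \<open>q\<^sub>i = 0\<close> and all \<open>q\<^sub>j \<ge> 0\<close>, agent i is indifferent while its neighbours lean towards D,
  so \<open>A\<^sub>i > 0\<close>.
\<close>

section \<open>Logistic choice probabilities\<close>

lemma logistic_p_bounds: "0 < logistic_p l s" "logistic_p l s < 1"
  unfolding logistic_p_def by (auto simp: field_simps add_pos_pos)

lemma logistic_p_zero: "logistic_p l 0 = 1 / 2"
  unfolding logistic_p_def by simp

lemma logistic_p_minus: "logistic_p l (- s) = 1 - logistic_p l s"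
proof -
  have "0 < 1 + exp (l * s)" by (simp add: add_pos_pos)
  then show ?thesis
    unfolding logistic_p_def by (simp add: exp_minus field_simps)
qed

lemma logistic_p_sub_half_le:
  assumes "0 \<le> l * s"
  shows "0 \<le> logistic_p l s - 1 / 2" "logistic_p l s - 1 / 2 \<le> l * s / 2"
proof -
  define E where "E = exp (- (l * s))"
  have E: "0 < E" "E \<le> 1" "1 - l * s \<le> E"
    using assms exp_ge_add_one_self[of "- (l * s)"] by (auto simp: E_def)
  have "logistic_p l s = 1 / (1 + E)"
    by (simp add: logistic_p_def E_def)
  then have half: "logistic_p l s - 1 / 2 = (1 - E) / (2 * (1 + E))"
    using E by (simp add: field_simps)
  show "0 \<le> logistic_p l s - 1 / 2"
    unfolding half using E by simp
  have "(1 - E) / (2 * (1 + E)) \<le> (1 - E) / 2"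
    using E by (intro divide_left_mono) auto
  also have "\<dots> \<le> l * s / 2"
    using E by simp
  finally show "logistic_p l s - 1 / 2 \<le> l * s / 2"
    unfolding half .
qed

lemma abs_logistic_p_sub_half_le: "\<bar>logistic_p l s - 1 / 2\<bar> \<le> \<bar>l * s\<bar> / 2"
proof (cases "0 \<le> l * s")
  case True
  then show ?thesis using logistic_p_sub_half_le[OF True] by simp
next
  case False
  then have "0 \<le> l * - s" by simp
  from logistic_p_sub_half_le[OF this] False show ?thesis
    by (simp add: logistic_p_minus)
qed

section \<open>Expected gain of D over C\<close>

definition pair_gain :: "real \<Rightarrow> real \<Rightarrow> real \<Rightarrow> real \<Rightarrow> real \<Rightarrow> real \<Rightarrow> real \<Rightarrow> real" where
  "pair_gain x y z w e p_i p_j =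
     (p_i + e * (1 - p_i)) * (p_j * w + (1 - p_j) * x) - (1 - p_i + e * p_i) * (p_j * y + (1 - p_j) * z)"

definition total_gain ::
  "('n \<Rightarrow> 'n \<Rightarrow> bool) \<Rightarrow> real \<Rightarrow> real \<Rightarrow> real \<Rightarrow> real \<Rightarrow> ('n \<Rightarrow> real) \<Rightarrow> ('n \<Rightarrow> real) \<Rightarrow> 'n \<Rightarrow> real" where
  "total_gain G x y z w eta p i = (\<Sum>j\<in>{j. G i j}. pair_gain x y z w (eta i) (p i) (p j))"

lemma dyn_rhs_eq_total_gain:
  "dyn_rhs G x y z w psi eta lamv qv i =
     - psi i * qv i + total_gain G x y z w eta (\<lambda>j. logistic_p (lamv j) (qv j)) i"
  by (simp add: dyn_rhs_def total_gain_def pair_gain_def Let_def sum_distrib_left sum_subtractf)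

lemma pair_gain_decomp:
  "pair_gain x y z w e p_i p_j =
     (1 + e) / 2 * ((w + x - y - z) / 2 + (p_j - 1 / 2) * ((w - x) + (z - y)))
     + (p_i - 1 / 2) * (1 - e) * ((p_j * w + (1 - p_j) * x) + (p_j * y + (1 - p_j) * z))"
  unfolding pair_gain_def by (simp add: field_simps)

lemma abs_convex_comb_le:
  fixes p a b :: real
  assumes "0 \<le> p" "p \<le> 1"
  shows "\<bar>p * a + (1 - p) * b\<bar> \<le> \<bar>a\<bar> + \<bar>b\<bar>"
proof -
  have "\<bar>p * a\<bar> \<le> \<bar>a\<bar>" "\<bar>(1 - p) * b\<bar> \<le> \<bar>b\<bar>"
    using assms by (simp_all add: abs_mult mult_left_le_one_le)
  then show ?thesis by linarith
qed

lemma abs_pair_gain_le: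
  assumes "0 \<le> e" "e \<le> 1" "0 \<le> p_i" "p_i \<le> 1" "0 \<le> p_j" "p_j \<le> 1"
  shows "\<bar>pair_gain x y z w e p_i p_j\<bar> \<le> \<bar>w\<bar> + \<bar>x\<bar> + \<bar>y\<bar> + \<bar>z\<bar>"
proof -
  define h where "h = p_j * w + (1 - p_j) * x"
  define k where "k = p_j * y + (1 - p_j) * z"
  have hk: "\<bar>h\<bar> \<le> \<bar>w\<bar> + \<bar>x\<bar>" "\<bar>k\<bar> \<le> \<bar>y\<bar> + \<bar>z\<bar>"
    unfolding h_def k_def using assms by (simp_all add: abs_convex_comb_le)
  have "0 \<le> (1 - e) * (1 - p_i)" "(1 - e) * (1 - p_i) \<le> 1"
       "0 \<le> (1 - e) * p_i" "(1 - e) * p_i \<le> 1"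
    using assms by (simp_all add: mult_le_one)
  then have "\<bar>p_i + e * (1 - p_i)\<bar> \<le> 1" "\<bar>1 - p_i + e * p_i\<bar> \<le> 1"
    by (simp_all add: algebra_simps)
  then have "\<bar>(p_i + e * (1 - p_i)) * h\<bar> \<le> \<bar>h\<bar>" "\<bar>(1 - p_i + e * p_i) * k\<bar> \<le> \<bar>k\<bar>"
    by (simp_all add: abs_mult mult_left_le_one_le)
  with hk show ?thesis
    unfolding pair_gain_def h_def[symmetric] k_def[symmetric] by linarith
qed

lemma pair_gain_pos_at_half:
  assumes "0 \<le> e" "1 / 2 \<le> p_j" "x < w" "y < z" "z + y < w + x"
  shows "0 < pair_gain x y z w e (1 / 2) p_j"
proof -
  have "0 \<le> (p_j - 1 / 2) * ((w - x) + (z - y))"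
    using assms by simp
  then have "0 < (w + x - y - z) / 2 + (p_j - 1 / 2) * ((w - x) + (z - y))"
    using assms by (intro add_pos_nonneg) auto
  then show ?thesis
    unfolding pair_gain_decomp using assms by simp
qed

lemma pair_gain_ge_near_half:
  assumes "0 \<le> e" "e \<le> 1" "0 \<le> p_j" "p_j \<le> 1" "x < w" "y < z"
    and near_i: "\<bar>p_i - 1 / 2\<bar> \<le> \<delta>" and near_j: "\<bar>p_j - 1 / 2\<bar> \<le> \<delta>"
    and small: "\<delta> * ((w - x) + (z - y) + (\<bar>w\<bar> + \<bar>x\<bar> + \<bar>y\<bar> + \<bar>z\<bar>)) \<le> (w + x - y - z) / 8"
  shows "(w + x - y - z) / 8 \<le> pair_gain x y z w e p_i p_j"
proof -
  define d where "d = w + x - y - z"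
  define K where "K = (w - x) + (z - y)"
  define C where "C = \<bar>w\<bar> + \<bar>x\<bar> + \<bar>y\<bar> + \<bar>z\<bar>"
  define D where "D = d / 2 + (p_j - 1 / 2) * K"
  define S where "S = (p_j * w + (1 - p_j) * x) + (p_j * y + (1 - p_j) * z)"
  have "0 \<le> \<delta>" "0 < K"
    using near_i assms by (auto simp: K_def)
  then have "0 \<le> \<delta> * K" "0 \<le> \<delta> * C"
    by (simp_all add: C_def)
  have "(- \<delta>) * K \<le> (p_j - 1 / 2) * K"
    using near_j \<open>0 < K\<close> by (intro mult_right_mono) auto
  then have D_ge: "d / 2 - \<delta> * K \<le> D"
    by (simp add: D_def)
  have budget: "\<delta> * K + \<delta> * C \<le> d / 8"
    using small by (simp add: d_def K_def C_def algebra_simps)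
  then have "0 \<le> D"
    using D_ge \<open>0 \<le> \<delta> * K\<close> \<open>0 \<le> \<delta> * C\<close> by linarith
  then have half_D: "1 / 2 * D \<le> (1 + e) / 2 * D"
    using assms(1) by (intro mult_right_mono) auto
  have "\<bar>p_j * w + (1 - p_j) * x\<bar> \<le> \<bar>w\<bar> + \<bar>x\<bar>" "\<bar>p_j * y + (1 - p_j) * z\<bar> \<le> \<bar>y\<bar> + \<bar>z\<bar>"
    using assms by (simp_all add: abs_convex_comb_le)
  then have "\<bar>S\<bar> \<le> C"
    unfolding S_def C_def by linarith
  then have "\<bar>(p_i - 1 / 2) * (1 - e) * S\<bar> \<le> \<delta> * 1 * C"
    unfolding abs_mult using near_i assms by (intro mult_mono) auto
  then have "- (\<delta> * C) \<le> (p_i - 1 / 2) * (1 - e) * S"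
    by linarith
  then show ?thesis
    using budget D_ge half_D \<open>0 \<le> \<delta> * K\<close>
    unfolding pair_gain_decomp D_def[symmetric] K_def[symmetric] d_def[symmetric]
      S_def[symmetric]
    by linarith
qed

lemma abs_total_gain_le:
  fixes G :: "'n::finite \<Rightarrow> 'n \<Rightarrow> bool"
  assumes "\<forall>j. 0 \<le> p j \<and> p j \<le> 1" "0 \<le> eta i" "eta i \<le> 1"
  shows "\<bar>total_gain G x y z w eta p i\<bar> \<le> real CARD('n) * (\<bar>w\<bar> + \<bar>x\<bar> + \<bar>y\<bar> + \<bar>z\<bar>)"
proof -
  have "\<bar>total_gain G x y z w eta p i\<bar> \<le> (\<Sum>j\<in>{j. G i j}. \<bar>w\<bar> + \<bar>x\<bar> + \<bar>y\<bar> + \<bar>z\<bar>)"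
    unfolding total_gain_def using assms
    by (intro order_trans[OF sum_abs] sum_mono abs_pair_gain_le) auto
  also have "\<dots> \<le> real CARD('n) * (\<bar>w\<bar> + \<bar>x\<bar> + \<bar>y\<bar> + \<bar>z\<bar>)"
    by (simp add: card_mono mult_right_mono)
  finally show ?thesis .
qed

lemma total_gain_ge:
  fixes G :: "'n::finite \<Rightarrow> 'n \<Rightarrow> bool"
  assumes "G i j0" "0 \<le> c" "\<forall>j. c \<le> pair_gain x y z w (eta i) (p i) (p j)"
  shows "c \<le> total_gain G x y z w eta p i"
proof -
  have "c \<le> pair_gain x y z w (eta i) (p i) (p j0)"
    using assms by blast
  also have "\<dots> \<le> total_gain G x y z w eta p i"
    unfolding total_gain_def using assms by (intro member_le_sum) (auto intro: order_trans)
  finally show ?thesis .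
qed

lemma total_gain_pos:
  fixes G :: "'n::finite \<Rightarrow> 'n \<Rightarrow> bool"
  assumes "G i j0" "\<forall>j. 0 < pair_gain x y z w (eta i) (p i) (p j)"
  shows "0 < total_gain G x y z w eta p i"
  unfolding total_gain_def using assms by (intro sum_pos2[of _ j0]) (auto intro: less_imp_le)

section \<open>Linear differential inequalities\<close>

lemma linear_ode_comparison:
  fixes f g :: "real \<Rightarrow> real"
  assumes "0 < ps" "0 \<le> b"
    and deriv: "\<And>t. t \<in> {0..b} \<Longrightarrow> (f has_real_derivative - ps * f t + g t) (at t within {0..})"
    and lower: "\<And>t. t \<in> {0..b} \<Longrightarrow> c \<le> g t"
  shows "f 0 + c * (exp (ps * b) - 1) / ps \<le> exp (ps * b) * f b"
proof -
  define H where "H t = exp (ps * t) * (f t - c / ps)" for t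
  have H_deriv: "(H has_real_derivative exp (ps * t) * (g t - c)) (at t within {0..b})"
    if "t \<in> {0..b}" for t
  proof -
    have "(f has_real_derivative - ps * f t + g t) (at t within {0..b})"
      using deriv[OF that] by (rule DERIV_subset) auto
    then have "(H has_real_derivative
        exp (ps * t) * ps * (f t - c / ps) + exp (ps * t) * (- ps * f t + g t)) (at t within {0..b})"
      unfolding H_def by (auto intro!: derivative_eq_intros)
    moreover have "exp (ps * t) * ps * (f t - c / ps) + exp (ps * t) * (- ps * f t + g t)
        = exp (ps * t) * (g t - c)"
      using \<open>0 < ps\<close> by (simp add: field_simps)
    ultimately show ?thesis by simp
  qed
  have "H 0 \<le> H b"
  proof (rule DERIV_nonneg_imp_increasing_open[OF \<open>0 \<le> b\<close>])
    fix t assume t: "0 < t" "t < b"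
    then have "(H has_real_derivative exp (ps * t) * (g t - c)) (at t)"
      using H_deriv[of t] at_within_Icc_at[of 0 t b] by simp
    moreover have "0 \<le> exp (ps * t) * (g t - c)"
      using lower[of t] t by simp
    ultimately show "\<exists>y. (H has_real_derivative y) (at t) \<and> 0 \<le> y" by blast
  next
    show "continuous_on {0..b} H"
      using H_deriv DERIV_continuous continuous_on_eq_continuous_within by blast
  qed
  then have "f 0 - c / ps \<le> exp (ps * b) * (f b - c / ps)"
    by (simp add: H_def)
  moreover have "c * (exp (ps * b) - 1) / ps = exp (ps * b) * (c / ps) - c / ps"
    using \<open>0 < ps\<close> by (simp add: field_simps)
  ultimately show ?thesis
    by (simp add: right_diff_distrib)
qed

lemma linear_ode_abs_bound:
  fixes f g :: "real \<Rightarrow> real"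
  assumes "0 < ps" "0 \<le> b"
    and deriv: "\<And>t. t \<in> {0..b} \<Longrightarrow> (f has_real_derivative - ps * f t + g t) (at t within {0..})"
    and bound: "\<And>t. t \<in> {0..b} \<Longrightarrow> \<bar>g t\<bar> \<le> M"
  shows "\<bar>f b\<bar> \<le> \<bar>f 0\<bar> + M / ps"
proof -
  define E where "E = exp (ps * b)"
  have "0 \<le> M"
    using bound[of 0] \<open>0 \<le> b\<close> by (meson abs_ge_zero atLeastAtMost_iff order.trans order_refl)
  then have "1 \<le> E" "0 \<le> M / ps"
    using assms by (auto simp: E_def)
  have lower_bound: "- (\<bar>v 0\<bar> + M / ps) \<le> v b"
    if "v 0 - M * (E - 1) / ps \<le> E * v b" for v :: "real \<Rightarrow> real"
  proof -
    have "E * (- (\<bar>v 0\<bar> + M / ps)) \<le> - \<bar>v 0\<bar> - M * (E - 1) / ps"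
      using \<open>1 \<le> E\<close> \<open>0 \<le> M / ps\<close> mult_right_mono[OF \<open>1 \<le> E\<close> abs_ge_zero[of "v 0"]]
      by (simp add: algebra_simps diff_divide_distrib)
    also have "\<dots> \<le> E * v b"
      using that by linarith
    finally show ?thesis
      using \<open>1 \<le> E\<close> by simp
  qed
  have "f 0 + (- M) * (E - 1) / ps \<le> E * f b"
  proof (unfold E_def, rule linear_ode_comparison)
    fix t assume "t \<in> {0..b}"
    show "- M \<le> g t"
      using bound[OF \<open>t \<in> {0..b}\<close>] by simp
  qed (use assms in auto)
  then have "- (\<bar>f 0\<bar> + M / ps) \<le> f b"
    by (intro lower_bound) simp
  moreover have "- f 0 + (- M) * (E - 1) / ps \<le> E * - f b"
  proof (unfold E_def, rule linear_ode_comparison[where g = "\<lambda>t. - g t"])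
    fix t assume "t \<in> {0..b}"
    show "((\<lambda>t. - f t) has_real_derivative - ps * - f t + - g t) (at t within {0..})"
      using DERIV_minus[OF deriv[OF \<open>t \<in> {0..b}\<close>]] by simp
    show "- M \<le> - g t"
      using bound[OF \<open>t \<in> {0..b}\<close>] by simp
  qed (use assms in auto)
  then have "- (\<bar>- f 0\<bar> + M / ps) \<le> - f b"
    by (intro lower_bound[where v = "\<lambda>t. - f t"]) simp
  ultimately show ?thesis
    by simp
qed

lemma linear_ode_positive:
  fixes f g :: "real \<Rightarrow> real"
  assumes "0 < ps" "0 < a" "\<bar>f 0\<bar> < a * b"
    and deriv: "\<And>t. t \<in> {0..b} \<Longrightarrow> (f has_real_derivative - ps * f t + g t) (at t within {0..})"
    and lower: "\<And>t. t \<in> {0..b} \<Longrightarrow> a \<le> g t"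
  shows "0 < f b"
proof -
  have "0 < a * b"
    using abs_ge_zero[of "f 0"] assms by linarith
  then have "0 < b"
    using \<open>0 < a\<close> by (simp add: zero_less_mult_iff)
  have "ps * b \<le> exp (ps * b) - 1"
    using exp_ge_add_one_self[of "ps * b"] by linarith
  then have "a * (ps * b) \<le> a * (exp (ps * b) - 1)"
    using \<open>0 < a\<close> by (intro mult_left_mono) auto
  then have "a * b \<le> a * (exp (ps * b) - 1) / ps"
    using \<open>0 < ps\<close> by (simp add: pos_le_divide_eq ac_simps)
  moreover have "f 0 + a * (exp (ps * b) - 1) / ps \<le> exp (ps * b) * f b"
    using assms \<open>0 < b\<close> by (intro linear_ode_comparison) auto
  ultimately have "0 < exp (ps * b) * f b"
    using \<open>\<bar>f 0\<bar> < a * b\<close> by linarith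
  then show ?thesis
    by (simp add: zero_less_mult_iff)
qed

lemma positive_orthant_forward_invariant:
  fixes q D :: "real \<Rightarrow> 'n::finite \<Rightarrow> real"
  assumes cont: "\<And>i. continuous_on {t0..} (\<lambda>t. q t i)"
    and start: "\<And>i. 0 < q t0 i"
    and deriv: "\<And>t i. t0 < t \<Longrightarrow> ((\<lambda>s. q s i) has_real_derivative D t i) (at t)"
    and boundary: "\<And>t i. t0 < t \<Longrightarrow> \<forall>j. 0 \<le> q t j \<Longrightarrow> q t i = 0 \<Longrightarrow> 0 < D t i"
    and "t0 \<le> t"
  shows "0 < q t i"
proof (rule ccontr)
  assume "\<not> 0 < q t i"
  define S where "S = {s. t0 \<le> s \<and> (\<exists>j. q s j \<le> 0)}"
  have "t \<in> S"
    using \<open>t0 \<le> t\<close> \<open>\<not> 0 < q t i\<close> by (auto simp: S_def not_less)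
  have "closed ({t0..} \<inter> (\<lambda>s. q s j) -` {..0})" for j
    using cont by (intro continuous_closed_preimage) auto
  then have "closed (\<Union>j. {t0..} \<inter> (\<lambda>s. q s j) -` {..0})"
    by (intro closed_UN) auto
  moreover have "S = (\<Union>j. {t0..} \<inter> (\<lambda>s. q s j) -` {..0})"
    by (auto simp: S_def)
  ultimately have "closed S"
    by simp
  have "bdd_below S"
    by (rule bdd_belowI[of _ t0]) (auto simp: S_def)
  define s0 where "s0 = Inf S"
  have "s0 \<in> S"
    unfolding s0_def using \<open>t \<in> S\<close> \<open>closed S\<close> \<open>bdd_below S\<close> by (intro closed_contains_Inf) auto
  then obtain i0 where i0: "q s0 i0 \<le> 0" and "t0 \<le> s0"
    by (auto simp: S_def)
  have before: "0 < q s j" if "t0 \<le> s" "s < s0" for s j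
  proof (rule ccontr)
    assume "\<not> 0 < q s j"
    then have "s \<in> S"
      using \<open>t0 \<le> s\<close> by (auto simp: S_def not_less)
    with \<open>s < s0\<close> \<open>bdd_below S\<close> show False
      unfolding s0_def by (meson cInf_lower not_le)
  qed
  have "t0 < s0"
    using start[of i0] i0 \<open>t0 \<le> s0\<close> by (cases "t0 = s0") auto
  have nonneg: "0 \<le> q s0 j" for j
  proof (rule ccontr)
    assume "\<not> 0 \<le> q s0 j"
    moreover have "continuous_on {t0..s0} (\<lambda>s. q s j)"
      using cont by (rule continuous_on_subset) auto
    ultimately obtain r where "t0 \<le> r" "r \<le> s0" "q r j = 0"
      using IVT2'[of "\<lambda>s. q s j" s0 0 t0] start[of j] \<open>t0 \<le> s0\<close> by auto
    with before[of r j] \<open>\<not> 0 \<le> q s0 j\<close> show False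
      by (cases "r = s0") auto
  qed
  then have "q s0 i0 = 0" "0 < D s0 i0"
    using i0 boundary[of s0 i0] \<open>t0 < s0\<close> by (auto simp: order.antisym)
  then obtain e where "0 < e" and e: "\<And>h. 0 < h \<Longrightarrow> h < e \<Longrightarrow> q (s0 - h) i0 < 0"
    using DERIV_pos_inc_left[OF deriv[OF \<open>t0 < s0\<close>]] by metis
  define h where "h = min e (s0 - t0) / 2"
  have "0 < h" "h < e" "h \<le> s0 - t0"
    using \<open>0 < e\<close> \<open>t0 < s0\<close> by (auto simp: h_def)
  with e before[of "s0 - h" i0] show False
    by force
qed

section \<open>Trajectories of the learning dynamics\<close>

lemma graph_connected_has_neighbour:
  fixes G :: "'n::finite \<Rightarrow> 'n \<Rightarrow> bool"
  assumes "2 \<le> CARD('n)" "graph_connected G"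
  shows "\<exists>j. G i j"
proof -
  obtain j :: 'n where "j \<noteq> i"
    using assms(1) by (metis (full_types) card_2_iff' ex_card)
  have "G\<^sup>*\<^sup>* i j"
    using assms(2) unfolding graph_connected_def by blast
  then show ?thesis
    by (cases rule: converse_rtranclpE) (use \<open>j \<noteq> i\<close> in auto)
qed

locale logit_game =
  fixes G :: "'n::finite \<Rightarrow> 'n \<Rightarrow> bool"
    and x y z w :: real
    and psi eta :: "'n \<Rightarrow> real"
  assumes has_neighbour: "\<And>i. \<exists>j. G i j"
    and payoffs: "x < w" "y < z" "z + y < w + x"
    and psi_pos: "\<And>i. 0 < psi i"
    and eta_range: "\<And>i. 0 \<le> eta i" "\<And>i. eta i \<le> 1"
begin

text \<open>
  While \<open>\<lambda>\<^sub>j < rate_bound q0 j\<close>, the a priori bound \<open>|q\<^sub>j| \<le> radius q0 j\<close> keeps every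
  choice probability within \<open>tolerance\<close> of 1/2, which is close enough for D to keep an
  advantage of \<open>(w + x - y - z) / 8\<close> against every neighbour.
\<close>

definition tolerance :: real where
  "tolerance = (w + x - y - z) / (8 * ((w - x) + (z - y) + (\<bar>w\<bar> + \<bar>x\<bar> + \<bar>y\<bar> + \<bar>z\<bar>)))"

definition radius :: "('n \<Rightarrow> real) \<Rightarrow> 'n \<Rightarrow> real" where
  "radius q0 i = \<bar>q0 i\<bar> + real CARD('n) * (\<bar>w\<bar> + \<bar>x\<bar> + \<bar>y\<bar> + \<bar>z\<bar>) / psi i"

definition warm_up_time :: "('n \<Rightarrow> real) \<Rightarrow> real" where
  "warm_up_time q0 = 8 * (\<Sum>i\<in>UNIV. \<bar>q0 i\<bar>) / (w + x - y - z) + 1"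

definition rate_bound :: "('n \<Rightarrow> real) \<Rightarrow> 'n \<Rightarrow> real" where
  "rate_bound q0 i = 2 * tolerance / (radius q0 i + 1)"

lemma tolerance_pos: "0 < tolerance"
  and tolerance_small:
    "tolerance * ((w - x) + (z - y) + (\<bar>w\<bar> + \<bar>x\<bar> + \<bar>y\<bar> + \<bar>z\<bar>)) \<le> (w + x - y - z) / 8"
proof -
  have "0 < (w - x) + (z - y) + (\<bar>w\<bar> + \<bar>x\<bar> + \<bar>y\<bar> + \<bar>z\<bar>)" "0 < w + x - y - z"
    using payoffs by (simp_all add: add_pos_nonneg)
  moreover have "0 < d / (8 * S) \<and> d / (8 * S) * S \<le> d / 8" if "0 < d" "0 < S" for d S :: real
    using that by simp
  ultimately show "0 < tolerance"
    "tolerance * ((w - x) + (z - y) + (\<bar>w\<bar> + \<bar>x\<bar> + \<bar>y\<bar> + \<bar>z\<bar>)) \<le> (w + x - y - z) / 8"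
    unfolding tolerance_def by blast+
qed

lemma radius_nonneg: "0 \<le> radius q0 i"
  using psi_pos[of i] by (simp add: radius_def add_nonneg_nonneg)

lemma rate_bound_pos: "0 < rate_bound q0 i"
  using tolerance_pos radius_nonneg[of q0 i] by (simp add: rate_bound_def)

lemma mult_radius_le_tolerance:
  assumes "0 \<le> l" "l < rate_bound q0 i"
  shows "l * radius q0 i \<le> 2 * tolerance"
proof -
  have "l * (radius q0 i + 1) < 2 * tolerance"
    using assms radius_nonneg[of q0 i] by (simp add: rate_bound_def pos_less_divide_eq)
  with \<open>0 \<le> l\<close> show ?thesis
    by (simp add: algebra_simps)
qed

lemma warm_up_time_pos: "0 < warm_up_time q0"
proof -
  have "0 \<le> 8 * (\<Sum>i\<in>UNIV. \<bar>q0 i\<bar>) / (w + x - y - z)"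
    using payoffs by (simp add: sum_nonneg)
  then show ?thesis
    unfolding warm_up_time_def by linarith
qed

lemma abs_less_warm_up_time: "\<bar>q0 i\<bar> < (w + x - y - z) / 8 * warm_up_time q0"
proof -
  define d where "d = w + x - y - z"
  have "0 < d"
    using payoffs by (simp add: d_def)
  have "\<bar>q0 i\<bar> \<le> (\<Sum>i\<in>UNIV. \<bar>q0 i\<bar>)"
    by (rule member_le_sum) auto
  moreover have "warm_up_time q0 = 8 * (\<Sum>i\<in>UNIV. \<bar>q0 i\<bar>) / d + 1"
    by (simp add: warm_up_time_def d_def)
  then have "d / 8 * warm_up_time q0 = (\<Sum>i\<in>UNIV. \<bar>q0 i\<bar>) + d / 8"
    using \<open>0 < d\<close> by (simp add: field_simps)
  ultimately show ?thesis
    using \<open>0 < d\<close> unfolding d_def[symmetric] by linarith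
qed

end

locale logit_trajectory = logit_game G x y z w psi eta
  for G :: "'n::finite \<Rightarrow> 'n \<Rightarrow> bool" and x y z w psi eta +
  fixes lam :: "'n \<Rightarrow> real \<Rightarrow> real"
    and q :: "real \<Rightarrow> 'n \<Rightarrow> real"
  assumes lam_pos: "\<And>i t. 0 \<le> t \<Longrightarrow> 0 < lam i t"
    and solves: "\<And>i t. 0 \<le> t \<Longrightarrow>
      ((\<lambda>s. q s i) has_real_derivative dyn_rhs G x y z w psi eta (\<lambda>j. lam j t) (q t) i)
        (at t within {0..})"
begin

definition prob :: "real \<Rightarrow> 'n \<Rightarrow> real" where
  "prob t j = logistic_p (lam j t) (q t j)"

lemma prob_range: "0 \<le> prob t j" "prob t j \<le> 1"
  using logistic_p_bounds[of "lam j t" "q t j"] by (simp_all add: prob_def)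

lemma solves_gain:
  "0 \<le> t \<Longrightarrow> ((\<lambda>s. q s i) has_real_derivative - psi i * q t i + total_gain G x y z w eta (prob t) i)
     (at t within {0..})"
  using solves[of t i] by (simp add: dyn_rhs_eq_total_gain prob_def[abs_def])

lemma continuous_on_trajectory: "continuous_on {0..} (\<lambda>t. q t i)"
  unfolding continuous_on_eq_continuous_within
  using solves_gain DERIV_continuous by (metis atLeast_iff)

lemma abs_le_radius:
  assumes "0 \<le> t"
  shows "\<bar>q t i\<bar> \<le> radius (q 0) i"
  unfolding radius_def
proof (rule linear_ode_abs_bound[OF psi_pos \<open>0 \<le> t\<close>])
  fix s assume "s \<in> {0..t}"
  then show "((\<lambda>s. q s i) has_real_derivative - psi i * q s i + total_gain G x y z w eta (prob s) i)
      (at s within {0..})"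
    by (intro solves_gain) auto
  show "\<bar>total_gain G x y z w eta (prob s) i\<bar> \<le> real CARD('n) * (\<bar>w\<bar> + \<bar>x\<bar> + \<bar>y\<bar> + \<bar>z\<bar>)"
    using prob_range eta_range by (intro abs_total_gain_le) auto
qed

lemma positive_after_warm_up:
  assumes warm_up: "\<And>j t. 0 \<le> t \<Longrightarrow> t \<le> warm_up_time (q 0) \<Longrightarrow> lam j t < rate_bound (q 0) j"
  shows "0 < q (warm_up_time (q 0)) i"
proof (rule linear_ode_positive[where f = "\<lambda>s. q s i", OF psi_pos _ abs_less_warm_up_time[of "q 0" i]])
  show "0 < (w + x - y - z) / 8"
    using payoffs by simp
  fix t assume t: "t \<in> {0..warm_up_time (q 0)}"
  then show "((\<lambda>s. q s i) has_real_derivative - psi i * q t i + total_gain G x y z w eta (prob t) i)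
      (at t within {0..})"
    by (intro solves_gain) auto
  have near_half: "\<bar>prob t j - 1 / 2\<bar> \<le> tolerance" for j
  proof -
    have "\<bar>prob t j - 1 / 2\<bar> \<le> lam j t * \<bar>q t j\<bar> / 2"
      using abs_logistic_p_sub_half_le[of "lam j t" "q t j"] lam_pos[of t j] t
      by (simp add: prob_def abs_mult)
    also have "\<dots> \<le> lam j t * radius (q 0) j / 2"
      using abs_le_radius[of t j] lam_pos[of t j] t by (simp add: mult_left_mono)
    also have "\<dots> \<le> tolerance"
      using mult_radius_le_tolerance[OF less_imp_le[OF lam_pos[of t j]] warm_up[of t j]] t by simp
    finally show ?thesis .
  qed
  obtain j0 where "G i j0"
    using has_neighbour by blast
  then show "(w + x - y - z) / 8 \<le> total_gain G x y z w eta (prob t) i"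
    using payoffs eta_range prob_range near_half tolerance_small
    by (intro total_gain_ge pair_gain_ge_near_half allI) auto
qed

lemma stays_positive:
  assumes "0 \<le> t1" "\<And>i. 0 < q t1 i" "t1 \<le> t"
  shows "0 < q t i"
proof (rule positive_orthant_forward_invariant[of t1 q
      "\<lambda>s i. - psi i * q s i + total_gain G x y z w eta (prob s) i"])
  show "0 < q t1 i" "t1 \<le> t" for i
    using assms by auto
  show "continuous_on {t1..} (\<lambda>t. q t i)" for i
    using continuous_on_trajectory by (rule continuous_on_subset) (use assms in auto)
next
  fix s i assume "t1 < s"
  then have "at s within {0..} = at s"
    using assms(1) by (intro at_within_interior) auto
  then show "((\<lambda>s. q s i) has_real_derivative - psi i * q s i + total_gain G x y z w eta (prob s) i) (at s)"
    using solves_gain[of s i] \<open>t1 < s\<close> assms(1) by simp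
next
  fix s i assume "t1 < s" "\<forall>j. 0 \<le> q s j" "q s i = 0"
  have "0 \<le> lam j s * q s j" for j
    using lam_pos[of s j] \<open>\<forall>j. 0 \<le> q s j\<close> \<open>t1 < s\<close> assms(1) by simp
  then have "1 / 2 \<le> prob s j" for j
    using logistic_p_sub_half_le(1) by (simp add: prob_def)
  moreover have "prob s i = 1 / 2"
    using \<open>q s i = 0\<close> by (simp add: prob_def logistic_p_zero)
  ultimately have "\<forall>j. 0 < pair_gain x y z w (eta i) (prob s i) (prob s j)"
    using pair_gain_pos_at_half[OF eta_range(1) _ payoffs] by metis
  moreover obtain j0 where "G i j0"
    using has_neighbour by blast
  ultimately show "0 < - psi i * q s i + total_gain G x y z w eta (prob s) i"
    using \<open>q s i = 0\<close> by (simp add: total_gain_pos)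
qed

lemma eventually_positive:
  assumes "\<And>j t. 0 \<le> t \<Longrightarrow> t \<le> warm_up_time (q 0) \<Longrightarrow> lam j t < rate_bound (q 0) j"
  shows "\<forall>\<^sub>F t in at_top. \<forall>i. 0 < q t i"
  unfolding eventually_at_top_linorder
  using stays_positive[OF less_imp_le[OF warm_up_time_pos] positive_after_warm_up[OF assms]]
  by blast

end

theorem corollary4:
  fixes G :: "'n::finite \<Rightarrow> 'n \<Rightarrow> bool"
    and x y z w :: real
    and psi eta :: "'n \<Rightarrow> real"
    and q0 :: "'n \<Rightarrow> real"
  assumes n2: "CARD('n) \<ge> 2"
    and irrefl: "\<forall>i. \<not> G i i"
    and sym: "\<forall>i j. G i j = G j i"
    and conn: "graph_connected G"
    and "z > w" and "w > x" and "x > y" and "w + x > z + y"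
    and "w > 0" and "z > 0"
    and psi_pos: "\<forall>i. psi i > 0"
    and eta_rng: "\<forall>i. 0 \<le> eta i \<and> eta i \<le> 1"
  shows "\<exists>lb T. (\<forall>i. lb i > 0) \<and> T > 0 \<and>
    (\<forall>(lam :: 'n \<Rightarrow> real \<Rightarrow> real) (q :: real \<Rightarrow> 'n \<Rightarrow> real).
       (\<forall>i t. t \<ge> 0 \<longrightarrow> lam i t > 0)
     \<and> (\<forall>i. mono_on {0..} (lam i))
     \<and> (\<forall>i. filterlim (lam i) at_top at_top)
     \<and> (\<forall>i t. 0 \<le> t \<and> t < T \<longrightarrow> lam i t < lb i)
     \<and> q 0 = q0
     \<and> (\<forall>i t. t \<ge> 0 \<longrightarrow>
          ((\<lambda>s. q s i) has_real_derivative
             dyn_rhs G x y z w psi eta (\<lambda>j. lam j t) (q t) i) (at t within {0..}))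
     \<longrightarrow> (\<forall>\<^sub>F t in at_top. \<forall>i. q t i > 0))"
proof -
  interpret logit_game G x y z w psi eta
    using graph_connected_has_neighbour[OF n2 conn] assms by unfold_locales auto
  show ?thesis
  proof (intro exI[of _ "rate_bound q0"] exI[of _ "warm_up_time q0 + 1"] conjI allI impI,
      goal_cases lb_pos T_pos trajectory)
    case (lb_pos i)
    show ?case by (rule rate_bound_pos)
  next
    case T_pos
    show ?case using warm_up_time_pos[of q0] by simp
  next
    case (trajectory lam q)
    interpret logit_trajectory G x y z w psi eta lam q
      using trajectory by unfold_locales blast+
    have "q 0 = q0"
      using trajectory by blast
    with trajectory show ?case
      by (intro eventually_positive) auto
  qed
qed

end
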